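(* Let $S$ be a non-empty poset and $(\mathcal{L},\rightharpoonup)=(L,\wedge,\vee,0,1)$ a complete lattice with an $S$-action. If $\mathcal{L}$ is multiplication, then $\mathcal{L}$ is $Spec^p(\mathcal{L})$-top; that is, with $X=Spec^p(\mathcal{L})$ and $V(a)=\{p\in X: a\leq p\}$ for $a\in L$, the family $\{V(a): a\in L\}$ is closed under finite unions.
   Context: An $S$-action on a lattice $(L,\wedge,\vee)$ is a map $\rightharpoonup:S\times L\to L$ such that $s_1\leq s_2\Rightarrow s_1\rightharpoonup x\leq s_2\rightharpoonup x$; $x\leq y\Rightarrow s\rightharpoonup x\leq s\rightharpoonup y$; and $s\rightharpoonup x\leq x$. The bounded lattice with $S$-action is multiplication iff every $x\in L$ equals $s\rightharpoonup 1$ for some $s\in S$. An element $x\in L\setminus\{1\}$ is prime iff for all $y\in L$ and $s\in S$: $s\rightharpoonup y\leq x$ implies $s\rightharpoonup 1\leq x$ or $y\leq x$; $Spec^p(\mathcal{L})$ is the set of prime elements. *)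

theory Defs
  imports Main
begin

definition S_action :: "('s::order \<Rightarrow> 'a::lattice \<Rightarrow> 'a) \<Rightarrow> bool" where
  "S_action act \<longleftrightarrow>
     (\<forall>s1 s2 x. s1 \<le> s2 \<longrightarrow> act s1 x \<le> act s2 x) \<and>
     (\<forall>s x y. x \<le> y \<longrightarrow> act s x \<le> act s y) \<and>
     (\<forall>s x. act s x \<le> x)"

definition multiplication :: "('s::order \<Rightarrow> 'a::bounded_lattice \<Rightarrow> 'a) \<Rightarrow> bool" where
  "multiplication act \<longleftrightarrow> (\<forall>x. \<exists>s. x = act s top)"

definition prime_el :: "('s::order \<Rightarrow> 'a::bounded_lattice \<Rightarrow> 'a) \<Rightarrow> 'a \<Rightarrow> bool" where
  "prime_el act x \<longleftrightarrow> x \<noteq> top \<and>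
     (\<forall>y s. act s y \<le> x \<longrightarrow> act s top \<le> x \<or> y \<le> x)"

definition Spec_p :: "('s::order \<Rightarrow> 'a::bounded_lattice \<Rightarrow> 'a) \<Rightarrow> 'a set" where
  "Spec_p act = {x. prime_el act x}"

definition V :: "('s::order \<Rightarrow> 'a::bounded_lattice \<Rightarrow> 'a) \<Rightarrow> 'a \<Rightarrow> 'a set" where
  "V act a = {p \<in> Spec_p act. a \<le> p}"

end

theory Submission
  imports Defs
begin

text \<open>In a multiplication lattice every \<open>a\<close> is \<open>s \<rightharpoonup> 1\<close>, so \<open>s \<rightharpoonup> b \<le> a \<sqinter> b\<close>.
  Hence a prime above \<open>a \<sqinter> b\<close> lies above \<open>s \<rightharpoonup> 1 = a\<close> or above \<open>b\<close>, i.e.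
  \<open>V(a \<sqinter> b) = V(a) \<union> V(b)\<close>; with \<open>V(1) = \<emptyset>\<close> this gives \<open>V(\<Sqinter>F) = \<Union>a\<in>F. V(a)\<close>
  for finite \<open>F\<close>.\<close>

lemma V_top: "V act top = {}"
  unfolding V_def Spec_p_def prime_el_def by (auto simp: top_unique)

lemma V_antimono: "a \<le> b \<Longrightarrow> V act b \<subseteq> V act a"
  unfolding V_def by auto

lemma V_inf:
  fixes act :: "'s::order \<Rightarrow> 'a::bounded_lattice \<Rightarrow> 'a"
  assumes action: "S_action act" and mult: "multiplication act"
  shows "V act (inf a b) = V act a \<union> V act b"
proof
  show "V act a \<union> V act b \<subseteq> V act (inf a b)"
    by (simp add: V_antimono)
next
  show "V act (inf a b) \<subseteq> V act a \<union> V act b"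
  proof
    fix p assume "p \<in> V act (inf a b)"
    hence prime: "prime_el act p" and le: "inf a b \<le> p"
      unfolding V_def Spec_p_def by auto
    obtain s where s: "a = act s top"
      using mult unfolding multiplication_def by blast
    have "act s b \<le> a" "act s b \<le> b"
      using action s unfolding S_action_def by auto
    hence "act s b \<le> p" using le by (meson le_inf_iff order_trans)
    hence "a \<le> p \<or> b \<le> p" using prime s unfolding prime_el_def by blast
    thus "p \<in> V act a \<union> V act b" using prime unfolding V_def Spec_p_def by auto
  qed
qed

lemma V_Inf_finite:
  fixes act :: "'s::order \<Rightarrow> 'a::complete_lattice \<Rightarrow> 'a"
  assumes "S_action act" and "multiplication act" and "finite F"
  shows "V act (Inf F) = (\<Union>a\<in>F. V act a)"
  using \<open>finite F\<close>
  by (induction F rule: finite_induct) (simp_all add: V_top V_inf[OF assms(1,2)])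

theorem mainTheorem9:
  fixes act :: "'s::order \<Rightarrow> 'a::complete_lattice \<Rightarrow> 'a"
  assumes "S_action act"
    and "multiplication act"
  shows "\<forall>F. finite F \<longrightarrow> (\<exists>c. (\<Union>a\<in>F. V act a) = V act c)"
  using V_Inf_finite[OF assms] by metis

end
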